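(* Let $u(z)=z+\sum_{n\ge1}u_nz^{n+1}\in\mathbb{C}[[z]]$. For every character $\varphi$ of $\mathcal H_{CK}$ (an algebra morphism $\mathcal H_{CK}\to\mathbb C$, so $\varphi(\emptyset)=1$), one has $$\alpha_u\Big(\sum_{t}\varphi(\mathrm{sk}(t))\,S^t\Big)=\sum_{T}\varphi(T)\,A_T(z),$$ where $t$ runs over reduced plane trees and $T$ over $\mathbb{N}^*$-decorated rooted trees (including the empty tree $\emptyset$). That is, $\alpha_u\circ\mathrm{sk}^*=\rho_u$, where $\mathrm{sk}^*(\varphi)=\varphi\circ\mathrm{sk}$ and $\rho_u(\varphi)(z)=\sum_T\varphi(T)A_T(z)$.
   Context: A reduced plane tree is a rooted plane tree in which every internal vertex has at least two children; $|$ denotes the single-leaf tree. The monomial $S^t$ in noncommuting variables $S_0,S_1,\dots$ is $S^{|}=S_0$ and $S^t=S_{n-1}S^{t_1}\cdots S^{t_n}$ if the root of $t$ has children subtrees $t_1,\dots,t_n$ ($n\ge2$). $\alpha_u$ sends a formal series $\sum_t c_tS^t$ to the formal power series $\sum_t c_t\,\alpha_u(S^t)\in\mathbb{C}[[z]]$, where $\alpha_u(S^t)$ is obtained by replacing $S_0$ by $z$ and $S_n$ by $u_n$ ($n\ge1$) in the commutative product. $\mathcal H_{CK}$ is the commutative polynomial algebra on the non-plane rooted trees with vertices decorated by positive integers (monomials are forests, unit the empty forest $\emptyset$); for a forest $F$, $B_n^+(F)$ is the tree with a new root decorated $n$ attached to the roots of $F$. The skeleton map is $\mathrm{sk}(|)=\emptyset$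 and $\mathrm{sk}(t)=B^+_{n-1}(\mathrm{sk}(t_1)\cdots\mathrm{sk}(t_n))$ if the root of $t$ has children subtrees $t_1,\dots,t_n$. The power series $A_T(z)$ are defined recursively: $A_\emptyset(z)=z$; $A_{B_n^+(\emptyset)}(z)=u_nz^{n+1}$; and if $T=B_n^+(T_1^{a_1}\cdots T_k^{a_k})$ with $T_1,\dots,T_k$ distinct nonempty decorated trees with multiplicities $a_1,\dots,a_k$, then $A_T(z)=\frac{1}{a_1!\cdots a_k!}A_{T_1}(z)^{a_1}\cdots A_{T_k}(z)^{a_k}\,\partial_z^{a_1+\cdots+a_k}\big(u_nz^{n+1}\big)$. *)

theory Defs
  imports "HOL-Library.Multiset" "HOL-Computational_Algebra.Formal_Power_Series"
begin

datatype ptree = PLeaf | PNode "ptree list"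

fun reduced :: "ptree \<Rightarrow> bool" where
  "reduced PLeaf = True"
| "reduced (PNode ts) = (2 \<le> length ts \<and> (\<forall>t\<in>set ts. reduced t))"

text \<open>Noncommutative monomial S^t as the word of indices of its letters S_i.\<close>
fun Smon :: "ptree \<Rightarrow> nat list" where
  "Smon PLeaf = [0]"
| "Smon (PNode ts) = (length ts - 1) # concat (map Smon ts)"

definition alpha_letter :: "(nat \<Rightarrow> complex) \<Rightarrow> nat \<Rightarrow> complex fps" where
  "alpha_letter u i = (if i = 0 then fps_X else fps_const (u i))"

definition alpha_mon :: "(nat \<Rightarrow> complex) \<Rightarrow> nat list \<Rightarrow> complex fps" where
  "alpha_mon u w = prod_list (map (alpha_letter u) w)"

datatype dtree = DNode nat "dtree multiset"

primrec labels :: "dtree \<Rightarrow> nat set" where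
  "labels (DNode n F) = insert n (\<Union> (set_mset (image_mset labels F)))"

definition pos_dec :: "dtree \<Rightarrow> bool" where
  "pos_dec T = (\<forall>n\<in>labels T. 1 \<le> n)"

definition pos_forest :: "dtree multiset \<Rightarrow> bool" where
  "pos_forest F = (\<forall>T\<in>#F. pos_dec T)"

text \<open>Characters of H_CK: determined by values on forests (monomials), unital, multiplicative.\<close>
definition character :: "(dtree multiset \<Rightarrow> complex) \<Rightarrow> bool" where
  "character \<phi> = (\<phi> {#} = 1 \<and>
     (\<forall>F G. pos_forest F \<longrightarrow> pos_forest G \<longrightarrow> \<phi> (F + G) = \<phi> F * \<phi> G))"

fun sk :: "ptree \<Rightarrow> dtree multiset" where
  "sk PLeaf = {#}"
| "sk (PNode ts) = {# DNode (length ts - 1) (sum_list (map sk ts)) #}"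

text \<open>For T = B_n^+(T_1^a_1 ... T_k^a_k):
  A_T = 1/(a_1!...a_k!) * A_{T_1}^a_1 ... A_{T_k}^a_k * d^(a_1+...+a_k)(u_n z^(n+1)).
  The case of the empty forest gives u_n z^(n+1).\<close>
primrec A :: "(nat \<Rightarrow> complex) \<Rightarrow> dtree \<Rightarrow> complex fps" where
  "A u (DNode n F) =
     fps_const (1 / (\<Prod>T\<in>set_mset F. of_nat (fact (count F T))))
     * prod_mset (image_mset (A u) F)
     * (fps_deriv ^^ size F) (fps_const (u n) * fps_X ^ (n + 1))"

text \<open>A_\<emptyset> = z; the empty tree is represented by the empty forest.\<close>
definition A_forest :: "(nat \<Rightarrow> complex) \<Rightarrow> dtree multiset \<Rightarrow> complex fps" where
  "A_forest u F = (if F = {#} then fps_X else A u (the_elem (set_mset F)))"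

definition Tindex :: "dtree multiset set" where
  "Tindex = insert {#} {{#T#} | T. pos_dec T}"

definition fps_locally_finite :: "('a \<Rightarrow> complex fps) \<Rightarrow> 'a set \<Rightarrow> bool" where
  "fps_locally_finite f I = (\<forall>k. finite {i\<in>I. fps_nth (f i) k \<noteq> 0})"

definition fps_fsum :: "('a \<Rightarrow> complex fps) \<Rightarrow> 'a set \<Rightarrow> complex fps" where
  "fps_fsum f I = Abs_fps (\<lambda>k. \<Sum>i\<in>{i\<in>I. fps_nth (f i) k \<noteq> 0}. fps_nth (f i) k)"

end

theory Submission
  imports Defs
begin

text \<open>Grouping reduced plane trees by their skeleton reduces the identity to the fact that,
  for every decorated tree T, the sum of alpha_u(S^t) over the reduced plane trees t with
  skeleton T is A_T. A plane tree with skeleton B_n^+(G) is a root with n + 1 ordered children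
  whose skeletons add up to G, the children with empty skeleton being leaves. Summing over the
  ordered lists of m such children gives (prod of A_T over G) * d^|G| z^m, divided by the product
  of the factorials of the multiplicities in G; this is an induction on m in which splitting off
  the first child is matched by the Leibniz rule d^k (z f) = z d^k f + k d^(k-1) f. All sums are
  locally finite because alpha_u(S^t) is a monomial of degree the number of leaves of t.\<close>

unbundle fps_syntax

lemma funpow_fps_deriv: "(fps_deriv ^^ n) f = fps_nth_deriv n f"
  by (induction n) (simp_all only: funpow.simps o_apply fps_nth_deriv_commute fps_nth_deriv.simps(1) id_apply)

lemma fps_nth_deriv_X_mult:
  fixes f :: "'a::comm_ring_1 fps"
  shows "fps_nth_deriv k (fps_X * f) = fps_X * fps_nth_deriv k f + of_nat k * fps_nth_deriv (k - 1) f"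
proof (induction k)
  case (Suc k)
  have "fps_nth_deriv (Suc k) (fps_X * f)
      = fps_deriv (fps_X * fps_nth_deriv k f + of_nat k * fps_nth_deriv (k - 1) f)"
    using Suc.IH by (simp only: fps_nth_deriv_commute)
  also have "\<dots> = fps_X * fps_deriv (fps_nth_deriv k f) + fps_nth_deriv k f
      + of_nat k * fps_deriv (fps_nth_deriv (k - 1) f)"
    by (simp add: fps_of_nat[symmetric] algebra_simps del: fps_of_nat)
  also have "of_nat k * fps_deriv (fps_nth_deriv (k - 1) f) = of_nat k * fps_nth_deriv k f"
    by (cases k) (simp_all only: fps_nth_deriv_commute diff_Suc_1 mult_zero_left of_nat_0)
  finally show ?case
    by (simp add: fps_nth_deriv_commute[symmetric] algebra_simps del: fps_nth_deriv.simps)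
qed simp

definition mset_fact :: "'a multiset \<Rightarrow> nat" where
  "mset_fact M = (\<Prod>x\<in>set_mset M. fact (count M x))"

lemma mset_fact_add_mset: "mset_fact (add_mset x M) = Suc (count M x) * mset_fact M"
proof -
  have "mset_fact (add_mset x M) = fact (Suc (count M x)) * (\<Prod>y\<in>set_mset M - {x}. fact (count M y))"
    unfolding mset_fact_def by (auto simp: prod.insert_remove split: if_splits intro!: prod.cong)
  moreover have "mset_fact M = fact (count M x) * (\<Prod>y\<in>set_mset M - {x}. fact (count M y))"
    by (cases "x \<in># M") (simp_all add: mset_fact_def prod.remove not_in_iff)
  ultimately show ?thesis by (simp add: algebra_simps)
qed

lemma mset_fact_remove:
  assumes "x \<in># M"
  shows "mset_fact M = count M x * mset_fact (M - {#x#})"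
  using mset_fact_add_mset[of x "M - {#x#}"] assms by (simp add: insert_DiffM)

lemma mset_fact_pos: "0 < mset_fact M"
  by (simp add: mset_fact_def)

lemma pos_dec_DNode: "pos_dec (DNode n G) \<longleftrightarrow> 1 \<le> n \<and> (\<forall>T\<in>#G. pos_dec T)"
  by (auto simp: pos_dec_def)

definition alpha_tree :: "(nat \<Rightarrow> complex) \<Rightarrow> ptree \<Rightarrow> complex fps" where
  "alpha_tree u t = alpha_mon u (Smon t)"

definition alpha_trees :: "(nat \<Rightarrow> complex) \<Rightarrow> ptree list \<Rightarrow> complex fps" where
  "alpha_trees u ts = (\<Prod>t\<leftarrow>ts. alpha_tree u t)"

lemma alpha_tree_PLeaf: "alpha_tree u PLeaf = fps_X"
  by (simp add: alpha_tree_def alpha_mon_def alpha_letter_def)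

lemma alpha_tree_PNode: "alpha_tree u (PNode ts) = alpha_letter u (length ts - 1) * alpha_trees u ts"
proof -
  have "prod_list (map (alpha_letter u) (concat (map Smon ts))) = alpha_trees u ts"
    by (induction ts) (simp_all add: alpha_trees_def alpha_tree_def alpha_mon_def)
  then show ?thesis by (simp add: alpha_tree_def alpha_mon_def)
qed

definition sk_fibre :: "dtree multiset \<Rightarrow> ptree set" where
  "sk_fibre F = {t. reduced t \<and> sk t = F}"

definition sk_list_fibre :: "nat \<Rightarrow> dtree multiset \<Rightarrow> ptree list set" where
  "sk_list_fibre m G = {ts. length ts = m \<and> (\<forall>t\<in>set ts. reduced t) \<and> sum_list (map sk ts) = G}"

text \<open>A skeleton is empty or a single tree, so these are the possible skeletons of the first
  tree in a list whose skeletons add up to \<open>G\<close>.\<close>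

definition sk_head_choices :: "dtree multiset \<Rightarrow> dtree multiset set" where
  "sk_head_choices G = insert {#} ((\<lambda>T. {#T#}) ` set_mset G)"

lemma sk_empty_iff: "sk t = {#} \<longleftrightarrow> t = PLeaf"
  by (cases t) simp_all

lemma sk_fibre_empty: "sk_fibre {#} = {PLeaf}"
  by (auto simp: sk_fibre_def sk_empty_iff)

lemma sk_fibre_DNode:
  assumes "1 \<le> n"
  shows "sk_fibre {#DNode n G#} = PNode ` sk_list_fibre (Suc n) G"
proof (intro equalityI subsetI)
  fix t assume "t \<in> sk_fibre {#DNode n G#}"
  moreover from this obtain ts where "t = PNode ts"
    by (cases t) (simp_all add: sk_fibre_def)
  ultimately show "t \<in> PNode ` sk_list_fibre (Suc n) G"
    by (auto simp: sk_fibre_def sk_list_fibre_def)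
qed (use assms in \<open>auto simp: sk_fibre_def sk_list_fibre_def\<close>)

lemma sk_list_fibre_0: "sk_list_fibre 0 G = (if G = {#} then {[]} else {})"
  by (auto simp: sk_list_fibre_def)

lemma sk_list_fibre_Suc:
  "sk_list_fibre (Suc m) G =
     (\<Union>F\<in>sk_head_choices G. (\<lambda>(t, ts). t # ts) ` (sk_fibre F \<times> sk_list_fibre m (G - F)))"
  (is "_ = ?U")
proof (intro equalityI subsetI)
  fix xs assume "xs \<in> sk_list_fibre (Suc m) G"
  then obtain t ts where xs: "xs = t # ts" and t: "reduced t" and ts: "length ts = m"
    "\<forall>t\<in>set ts. reduced t" "sk t + sum_list (map sk ts) = G"
    by (cases xs) (auto simp: sk_list_fibre_def)
  have "sk t \<in> sk_head_choices G"
    using ts(3) by (cases t) (auto simp: sk_head_choices_def)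
  moreover have "(t, ts) \<in> sk_fibre (sk t) \<times> sk_list_fibre m (G - sk t)"
    using t ts by (auto simp: sk_fibre_def sk_list_fibre_def)
  ultimately show "xs \<in> ?U"
    using xs by blast
next
  fix xs assume "xs \<in> ?U"
  then obtain F t ts where F: "F \<in> sk_head_choices G" and "xs = t # ts"
    "t \<in> sk_fibre F" "ts \<in> sk_list_fibre m (G - F)"
    by auto
  moreover have "F + (G - F) = G"
    using F by (auto simp: sk_head_choices_def)
  ultimately show "xs \<in> sk_list_fibre (Suc m) G"
    by (auto simp: sk_fibre_def sk_list_fibre_def)
qed

lemma finite_sk_list_fibre:
  assumes "\<forall>T\<in>#G. finite (sk_fibre {#T#})"
  shows "finite (sk_list_fibre m G)"
  using assms
proof (induction m arbitrary: G)
  case (Suc m)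
  have "finite (sk_fibre F)" if "F \<in> sk_head_choices G" for F
    using that Suc.prems by (auto simp: sk_head_choices_def sk_fibre_empty)
  moreover have "finite (sk_list_fibre m (G - F))" for F
    using Suc by (meson in_diffD)
  moreover have "finite (sk_head_choices G)"
    by (simp add: sk_head_choices_def)
  ultimately show ?case
    unfolding sk_list_fibre_Suc by (blast intro: finite_UN_I finite_imageI finite_cartesian_product)
qed (simp add: sk_list_fibre_0)

lemma sum_alpha_trees_sk_list_fibre_Suc:
  assumes "\<forall>T\<in>#G. finite (sk_fibre {#T#})"
  shows "sum (alpha_trees u) (sk_list_fibre (Suc m) G) =
           fps_X * sum (alpha_trees u) (sk_list_fibre m G)
         + (\<Sum>T\<in>set_mset G.
              sum (alpha_tree u) (sk_fibre {#T#}) * sum (alpha_trees u) (sk_list_fibre m (G - {#T#})))"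
proof -
  let ?cons = "\<lambda>(t, ts). t # ts"
    and ?term = "\<lambda>F. sum (alpha_tree u) (sk_fibre F) * sum (alpha_trees u) (sk_list_fibre m (G - F))"
  have fin: "finite (sk_fibre F \<times> sk_list_fibre m (G - F))" if "F \<in> sk_head_choices G" for F
    using that assms finite_sk_list_fibre[of "G - F" m]
    by (auto simp: sk_head_choices_def sk_fibre_empty dest: in_diffD)
  have "sum (alpha_trees u) (sk_list_fibre (Suc m) G)
      = (\<Sum>F\<in>sk_head_choices G. sum (alpha_trees u) (?cons ` (sk_fibre F \<times> sk_list_fibre m (G - F))))"
    unfolding sk_list_fibre_Suc
    by (rule sum.UNION_disjoint) (use fin in \<open>auto simp: sk_head_choices_def sk_fibre_def\<close>)
  also have "\<dots> = (\<Sum>F\<in>sk_head_choices G. ?term F)"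
    by (intro sum.cong refl)
      (simp add: sum.reindex inj_on_def sum_product sum.cartesian_product alpha_trees_def case_prod_unfold)
  also have "\<dots> = ?term {#} + (\<Sum>T\<in>set_mset G. ?term {#T#})"
    unfolding sk_head_choices_def by (subst sum.insert) (auto simp: sum.reindex inj_on_def)
  finally show ?thesis
    by (simp add: sk_fibre_empty alpha_tree_PLeaf)
qed

lemma sum_alpha_trees_sk_list_fibre:
  assumes "\<forall>T\<in>#G. finite (sk_fibre {#T#}) \<and> sum (alpha_tree u) (sk_fibre {#T#}) = A u T"
  shows "of_nat (mset_fact G) * sum (alpha_trees u) (sk_list_fibre m G)
           = (\<Prod>T\<in>#G. A u T) * fps_nth_deriv (size G) (fps_X ^ m)"
  using assms
proof (induction m arbitrary: G)
  case 0
  then show ?case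
    by (cases "G = {#}") (simp_all add: sk_list_fibre_0 mset_fact_def alpha_trees_def)
next
  case (Suc m)
  let ?D = "\<lambda>k. fps_nth_deriv k (fps_X ^ m)" and ?PA = "\<Prod>T\<in>#G. A u T"
    and ?S = "\<lambda>G'. sum (alpha_trees u) (sk_list_fibre m G')"
  have IH: "of_nat (mset_fact (G - F)) * ?S (G - F)
      = (\<Prod>T\<in>#G - F. A u T) * ?D (size (G - F))" for F
    using Suc by (meson in_diffD)
  have summand: "of_nat (mset_fact G) * (A u T * ?S (G - {#T#}))
      = of_nat (count G T) * (?PA * ?D (size G - 1))"
    if T: "T \<in># G" for T
  proof -
    have "?PA = A u T * (\<Prod>T\<in>#G - {#T#}. A u T)"
      using T by (metis image_mset_add_mset insert_DiffM prod_mset.add_mset)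
    then show ?thesis
      using IH[of "{#T#}"] T by (simp add: mset_fact_remove[OF T] size_Diff_singleton algebra_simps)
  qed
  have "of_nat (mset_fact G) * sum (alpha_trees u) (sk_list_fibre (Suc m) G)
      = fps_X * (of_nat (mset_fact G) * ?S G)
      + (\<Sum>T\<in>set_mset G. of_nat (mset_fact G) * (A u T * ?S (G - {#T#})))"
    using Suc.prems by (simp add: sum_alpha_trees_sk_list_fibre_Suc sum_distrib_left algebra_simps)
  also have "\<dots> = fps_X * (?PA * ?D (size G))
      + (\<Sum>T\<in>set_mset G. of_nat (count G T) * (?PA * ?D (size G - 1)))"
    using IH[of "{#}"] summand by simp
  also have "\<dots> = fps_X * (?PA * ?D (size G)) + of_nat (size G) * (?PA * ?D (size G - 1))"
    by (simp add: sum_distrib_right[symmetric] size_multiset_overloaded_eq)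
  also have "\<dots> = ?PA * fps_nth_deriv (size G) (fps_X ^ Suc m)"
    by (simp add: fps_nth_deriv_X_mult algebra_simps)
  finally show ?case .
qed

lemma sum_alpha_tree_sk_fibre:
  assumes "pos_dec T"
  shows "finite (sk_fibre {#T#}) \<and> sum (alpha_tree u) (sk_fibre {#T#}) = A u T"
  using assms
proof (induction T)
  case (DNode n G)
  have n: "1 \<le> n"
    and hyp: "\<forall>T\<in>#G. finite (sk_fibre {#T#}) \<and> sum (alpha_tree u) (sk_fibre {#T#}) = A u T"
    using DNode by (auto simp: pos_dec_DNode)
  let ?S = "sum (alpha_trees u) (sk_list_fibre (Suc n) G)" and ?PA = "\<Prod>T\<in>#G. A u T"
  have fin: "finite (sk_fibre {#DNode n G#})"
    using hyp finite_sk_list_fibre by (simp add: sk_fibre_DNode[OF n])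
  have "sum (alpha_tree u) (sk_fibre {#DNode n G#}) = fps_const (u n) * ?S"
    using n by (auto simp: sk_fibre_DNode sum.reindex inj_on_def sum_distrib_left alpha_tree_PNode
        alpha_letter_def sk_list_fibre_def intro: sum.cong)
  also have "\<dots> = fps_const (u n) * (fps_const (1 / of_nat (mset_fact G)) * (of_nat (mset_fact G) * ?S))"
  proof -
    have "fps_const (1 / of_nat (mset_fact G)) * of_nat (mset_fact G) = (1 :: complex fps)"
      using mset_fact_pos[of G] by (simp flip: fps_of_nat)
    then show ?thesis
      by (metis mult.assoc mult_1)
  qed
  also have "\<dots> = fps_const (u n)
      * (fps_const (1 / of_nat (mset_fact G)) * (?PA * fps_nth_deriv (size G) (fps_X ^ Suc n)))"
    by (simp only: sum_alpha_trees_sk_list_fibre[OF hyp])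
  also have "\<dots> = A u (DNode n G)"
    by (simp add: funpow_fps_deriv mset_fact_def of_nat_prod mult_ac del: power_Suc)
  finally show ?case
    using fin by simp
qed

fun leaves :: "ptree \<Rightarrow> nat" where
  "leaves PLeaf = 1"
| "leaves (PNode ts) = (\<Sum>t\<leftarrow>ts. leaves t)"

lemma prod_list_fps_monomials:
  fixes f :: "'a \<Rightarrow> 'b::comm_semiring_1 fps"
  assumes "\<forall>x\<in>set xs. \<exists>c. f x = fps_const c * fps_X ^ d x"
  shows "\<exists>c. (\<Prod>x\<leftarrow>xs. f x) = fps_const c * fps_X ^ (\<Sum>x\<leftarrow>xs. d x)"
  using assms
proof (induction xs)
  case (Cons x xs)
  then obtain a b where "f x = fps_const a * fps_X ^ d x"
    and "(\<Prod>x\<leftarrow>xs. f x) = fps_const b * fps_X ^ (\<Sum>x\<leftarrow>xs. d x)"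
    by auto
  then have "(\<Prod>x\<leftarrow>x # xs. f x) = fps_const (a * b) * fps_X ^ (\<Sum>x\<leftarrow>x # xs. d x)"
    by (simp add: power_add mult_ac flip: fps_const_mult)
  then show ?case by blast
qed (auto intro: exI[of _ 1])

lemma alpha_tree_monomial: "reduced t \<Longrightarrow> \<exists>c. alpha_tree u t = fps_const c * fps_X ^ leaves t"
proof (induction t)
  case PLeaf
  then show ?case by (auto simp: alpha_tree_PLeaf intro: exI[of _ 1])
next
  case (PNode ts)
  obtain c where "alpha_trees u ts = fps_const c * fps_X ^ leaves (PNode ts)"
    using prod_list_fps_monomials[of ts "alpha_tree u" leaves] PNode by (auto simp: alpha_trees_def)
  then have "alpha_tree u (PNode ts) = fps_const (u (length ts - 1) * c) * fps_X ^ leaves (PNode ts)"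
    using PNode.prems by (simp add: alpha_tree_PNode alpha_letter_def)
  then show ?case by blast
qed

lemma coeff_alpha_tree_nonzero: "reduced t \<Longrightarrow> alpha_tree u t $ k \<noteq> 0 \<Longrightarrow> k = leaves t"
  using alpha_tree_monomial[of t u] by (auto split: if_splits)

lemma leaves_pos: "reduced t \<Longrightarrow> 0 < leaves t"
proof (induction t)
  case (PNode ts)
  then obtain t where "t \<in> set ts"
    by (cases ts) auto
  with PNode show ?case
    using member_le_sum_list[of "leaves t" "map leaves ts"] by fastforce
qed simp

lemma length_le_sum_leaves: "\<forall>t\<in>set ts. reduced t \<Longrightarrow> length ts \<le> (\<Sum>t\<leftarrow>ts. leaves t)"
  using sum_list_mono[of ts "\<lambda>_. 1::nat" leaves] leaves_pos by (simp add: sum_list_triv Suc_le_eq)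

lemma leaves_child_less:
  assumes "reduced (PNode ts)" and "s \<in> set ts"
  shows "leaves s < leaves (PNode ts)"
proof -
  have "length (remove1 s ts) \<le> (\<Sum>t\<leftarrow>remove1 s ts. leaves t)"
    using assms by (intro length_le_sum_leaves) (auto dest: notin_set_remove1)
  moreover have "1 \<le> length (remove1 s ts)"
    using assms by (auto simp: length_remove1)
  ultimately show ?thesis
    using sum_list_map_remove1[OF assms(2), of leaves] by simp
qed

lemma finite_reduced_leaves_le: "finite {t. reduced t \<and> leaves t \<le> k}"
proof (induction k)
  case 0
  have "{t. reduced t \<and> leaves t \<le> 0} = {}"
    using leaves_pos by fastforce
  then show ?case
    by (metis finite.emptyI)
next
  case (Suc k)
  let ?R = "{t. reduced t \<and> leaves t \<le> k}"
  let ?Ts = "{ts. set ts \<subseteq> ?R \<and> length ts \<le> Suc k}"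
  have "{t. reduced t \<and> leaves t \<le> Suc k} \<subseteq> insert PLeaf (PNode ` ?Ts)"
  proof
    fix t assume t: "t \<in> {t. reduced t \<and> leaves t \<le> Suc k}"
    show "t \<in> insert PLeaf (PNode ` ?Ts)"
    proof (cases t)
      case (PNode ts)
      have "leaves s \<le> k" if "s \<in> set ts" for s
        using leaves_child_less[of ts s] that t PNode by auto
      moreover have "length ts \<le> Suc k"
        using length_le_sum_leaves[of ts] t PNode by auto
      ultimately show ?thesis
        using t PNode by auto
    qed simp
  qed
  moreover have "finite (PNode ` ?Ts)"
    using finite_lists_length_le[OF Suc.IH] by simp
  ultimately show ?case
    by (simp add: finite_subset)
qed

lemma fps_fsum_regroup:
  fixes f :: "'a \<Rightarrow> complex fps" and g :: "'b \<Rightarrow> complex fps"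
  assumes image: "h ` I \<subseteq> J"
    and finite_fibres: "\<And>j. j \<in> J \<Longrightarrow> finite {i\<in>I. h i = j}"
    and g_eq: "\<And>j. j \<in> J \<Longrightarrow> g j = (\<Sum>i\<in>{i\<in>I. h i = j}. f i)"
    and "fps_locally_finite f I"
  shows "fps_locally_finite g J \<and> fps_fsum g J = fps_fsum f I"
proof -
  define S where "S k = {i\<in>I. f i $ k \<noteq> 0}" for k
  have fin: "finite (S k)" for k
    using assms(4) by (simp add: S_def fps_locally_finite_def)
  have g_nth: "g j $ k = (\<Sum>i\<in>{i\<in>S k. h i = j}. f i $ k)" if "j \<in> J" for j k
    unfolding g_eq[OF that] fps_sum_nth using finite_fibres[OF that]
    by (intro sum.mono_neutral_right) (auto simp: S_def)
  have supp: "{j\<in>J. g j $ k \<noteq> 0} \<subseteq> h ` S k" for k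
  proof
    fix j assume "j \<in> {j\<in>J. g j $ k \<noteq> 0}"
    then have "{i\<in>S k. h i = j} \<noteq> {}"
      using g_nth by force
    then show "j \<in> h ` S k" by blast
  qed
  have "fps_fsum g J $ k = (\<Sum>j\<in>h ` S k. g j $ k)" for k
    unfolding fps_fsum_def fps_nth_Abs_fps
    by (rule sum.mono_neutral_left) (use fin supp image in \<open>auto simp: S_def\<close>)
  also have "\<dots> k = (\<Sum>j\<in>h ` S k. \<Sum>i\<in>{i\<in>S k. h i = j}. f i $ k)" for k
    using image by (intro sum.cong refl) (auto simp: g_nth S_def)
  also have "\<dots> k = (\<Sum>i\<in>S k. f i $ k)" for k
    by (rule sum.image_gen[OF fin, symmetric])
  also have "\<dots> k = fps_fsum f I $ k" for k
    by (simp add: fps_fsum_def S_def)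
  finally have "fps_fsum g J = fps_fsum f I"
    by (simp add: fps_ext)
  moreover have "fps_locally_finite g J"
    unfolding fps_locally_finite_def using supp fin by (meson finite_surj)
  ultimately show ?thesis by blast
qed

lemma sk_in_Tindex: "reduced t \<Longrightarrow> sk t \<in> Tindex"
proof (induction t)
  case (PNode ts)
  have "pos_dec T" if "t \<in> set ts" "T \<in># sk t" for t T
    using PNode.IH[OF that(1)] PNode.prems that by (auto simp: Tindex_def)
  then have "\<forall>T\<in>#sum_list (map sk ts). pos_dec T"
    by (auto simp: set_mset_sum_list)
  then show ?case
    using PNode.prems by (auto simp: Tindex_def pos_dec_DNode)
qed (simp add: Tindex_def)

lemma sum_alpha_tree_sk_fibre_Tindex:
  assumes "F \<in> Tindex"
  shows "finite (sk_fibre F) \<and> sum (alpha_tree u) (sk_fibre F) = A_forest u F"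
  using assms sum_alpha_tree_sk_fibre
  by (auto simp: Tindex_def A_forest_def sk_fibre_empty alpha_tree_PLeaf)

theorem mainTheorem9:
  fixes u :: "nat \<Rightarrow> complex" and \<phi> :: "dtree multiset \<Rightarrow> complex"
  assumes "character \<phi>"
  shows "fps_locally_finite (\<lambda>t. fps_const (\<phi> (sk t)) * alpha_mon u (Smon t)) {t. reduced t}
       \<and> fps_locally_finite (\<lambda>F. fps_const (\<phi> F) * A_forest u F) Tindex
       \<and> fps_fsum (\<lambda>t. fps_const (\<phi> (sk t)) * alpha_mon u (Smon t)) {t. reduced t}
         = fps_fsum (\<lambda>F. fps_const (\<phi> F) * A_forest u F) Tindex"
proof -
  let ?f = "\<lambda>t. fps_const (\<phi> (sk t)) * alpha_mon u (Smon t)"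
    and ?g = "\<lambda>F. fps_const (\<phi> F) * A_forest u F"
  have fibre: "{t\<in>{t. reduced t}. sk t = F} = sk_fibre F" for F
    by (auto simp: sk_fibre_def)
  have "{t\<in>{t. reduced t}. ?f t $ k \<noteq> 0} \<subseteq> {t. reduced t \<and> leaves t \<le> k}" for k
    using coeff_alpha_tree_nonzero by (fastforce simp: alpha_tree_def)
  then have lf: "fps_locally_finite ?f {t. reduced t}"
    unfolding fps_locally_finite_def using finite_reduced_leaves_le by (blast intro: finite_subset)
  have "(\<Sum>t\<in>sk_fibre F. ?f t) = fps_const (\<phi> F) * sum (alpha_tree u) (sk_fibre F)" for F
    unfolding sum_distrib_left by (rule sum.cong) (auto simp: sk_fibre_def alpha_tree_def)
  then have "?g F = (\<Sum>t\<in>{t\<in>{t. reduced t}. sk t = F}. ?f t)" if "F \<in> Tindex" for F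
    unfolding fibre using sum_alpha_tree_sk_fibre_Tindex[OF that, of u] by simp
  moreover have "finite {t\<in>{t. reduced t}. sk t = F}" if "F \<in> Tindex" for F
    unfolding fibre using sum_alpha_tree_sk_fibre_Tindex[OF that] by simp
  ultimately have "fps_locally_finite ?g Tindex \<and> fps_fsum ?g Tindex = fps_fsum ?f {t. reduced t}"
    using sk_in_Tindex lf by (intro fps_fsum_regroup) auto
  with lf show ?thesis
    by simp
qed

end
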